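(* Let $X=(X(t),t\in\mathbb{R}^d)$ be a real-valued centered isotropic Gaussian random field with continuous sample paths, whose covariance is $\mathrm{Cov}(X(s),X(t))=R_X(\|t-s\|)$ with $R_X:[0,\infty)\to\mathbb{R}$ nonincreasing. Then for any $a,b\in\mathbb{R}^d$, the straight-line path $\xi(u)=a+u(b-a)$, $0\le u\le1$, attains the supremum $$\sup_{\xi\in\mathcal{P}(a,b)}\ \min_{\mu\in M_1^+([0,1])}\int_0^1\!\!\int_0^1R_X(\|\xi(u)-\xi(v)\|)\,\mu(du)\mu(dv).$$
   Context: $\mathcal{P}(a,b)$ is the set of continuous maps $\xi:[0,1]\to\mathbb{R}^d$ with $\xi(0)=a$, $\xi(1)=b$. $M_1^+([0,1])$ is the set of Borel probability measures on $[0,1]$. (The reciprocal of this supremum is the exponent $C_X(a,b)$ in $\lim_{u\to\infty}u^{-2}\log P(\exists\,\xi\in\mathcal{P}(a,b): X(\xi(v))>u\ \forall v)=-\frac12C_X(a,b)$.) *)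

theory Defs
  imports "HOL-Probability.Probability"
begin

definition centered_gaussian_rv :: "'w measure \<Rightarrow> ('w \<Rightarrow> real) \<Rightarrow> bool" where
  "centered_gaussian_rv M Y \<longleftrightarrow>
     Y \<in> borel_measurable M \<and>
     ((AE \<omega> in M. Y \<omega> = 0) \<or> (\<exists>\<sigma>>0. distributed M lborel Y (normal_density 0 \<sigma>)))"

definition centered_gaussian_field :: "'w measure \<Rightarrow> ('a \<Rightarrow> 'w \<Rightarrow> real) \<Rightarrow> bool" where
  "centered_gaussian_field M X \<longleftrightarrow>
     (\<forall>t. X t \<in> borel_measurable M) \<and>
     (\<forall>F c. finite F \<longrightarrow> centered_gaussian_rv M (\<lambda>\<omega>. \<Sum>t\<in>F. c t * X t \<omega>))"

definition paths :: "'a::real_normed_vector \<Rightarrow> 'a \<Rightarrow> (real \<Rightarrow> 'a) set" where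
  "paths a b = {\<xi>. continuous_on {0..1} \<xi> \<and> \<xi> 0 = a \<and> \<xi> 1 = b}"

definition prob_measures_01 :: "real measure set" where
  "prob_measures_01 = {\<mu>. prob_space \<mu> \<and> sets \<mu> = sets (restrict_space borel {0..1})}"

definition path_energy :: "(real \<Rightarrow> real) \<Rightarrow> (real \<Rightarrow> 'a::real_normed_vector) \<Rightarrow> real" where
  "path_energy R \<xi> = (INF \<mu>\<in>prob_measures_01.
      \<integral>u. (\<integral>v. R (norm (\<xi> u - \<xi> v)) \<partial>\<mu>) \<partial>\<mu>)"

end

theory Submission
  imports Defs
begin

text \<open>Let \<xi> be a path from a to b. Its projection \<open>u \<mapsto> \<langle>\<xi> u - a, b - a\<rangle>\<close> runs continuously
  from 0 to \<open>\<parallel>b - a\<parallel>\<^sup>2\<close>, so it has a monotone right inverse; reparametrising \<xi> by it gives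
  a monotone \<open>g : [0,1] \<rightarrow> [0,1]\<close> with \<open>\<parallel>\<xi>(g s) - \<xi>(g t)\<parallel> \<ge> \<bar>s - t\<bar> \<parallel>b - a\<parallel>\<close>, the distance
  between the points s, t of the straight line. As R is nonincreasing, the energy of \<xi>
  under the image measure \<open>g\<^sub>*\<mu>\<close> is at most the energy of the line under \<mu>, so the
  infimum defining the energy of \<xi> never exceeds the energy of the line.\<close>

abbreviation borel_01 :: "real measure" where
  "borel_01 \<equiv> restrict_space borel {0..1}"

definition energy :: "(real \<Rightarrow> real) \<Rightarrow> (real \<Rightarrow> 'a::real_normed_vector) \<Rightarrow> real measure \<Rightarrow> real"
  where "energy R \<xi> \<mu> = (\<integral>u. (\<integral>v. R (norm (\<xi> u - \<xi> v)) \<partial>\<mu>) \<partial>\<mu>)"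

lemma path_energy_eq_INF_energy: "path_energy R \<xi> = (INF \<mu>\<in>prob_measures_01. energy R \<xi> \<mu>)"
  unfolding path_energy_def energy_def ..

lemma return_in_prob_measures_01: "x \<in> {0..1} \<Longrightarrow> return borel_01 x \<in> prob_measures_01"
  unfolding prob_measures_01_def by (auto intro!: prob_space_return simp: space_restrict_space)

lemma space_prob_measures_01: "\<mu> \<in> prob_measures_01 \<Longrightarrow> space \<mu> = {0..1}"
  unfolding prob_measures_01_def using sets_eq_imp_space_eq[of \<mu> borel_01] by simp

lemma distr_in_prob_measures_01:
  assumes "prob_space \<mu>" "g \<in> measurable \<mu> borel_01"
  shows "distr \<mu> borel_01 g \<in> prob_measures_01"
  using prob_space.prob_space_distr[OF assms] unfolding prob_measures_01_def by simp

lemma borel_measurable_antimono_norm: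
  fixes R :: "real \<Rightarrow> real"
  assumes R: "antimono_on {0..} R"
  shows "(\<lambda>x::'a::real_normed_vector. R (norm x)) \<in> borel_measurable borel"
proof -
  have "mono (\<lambda>x. - R (max 0 x))"
    by (auto intro!: monoI monotone_onD[OF R])
  then have "(\<lambda>x. - (- R (max 0 x))) \<in> borel_measurable borel"
    by (intro borel_measurable_uminus borel_measurable_mono)
  then have "(\<lambda>x. R (max 0 x)) \<in> borel_measurable borel"
    by simp
  from measurable_compose[OF borel_measurable_norm this] show ?thesis
    by (simp add: o_def)
qed

lemma borel_measurable_kernel:
  fixes h :: "'b \<Rightarrow> 'a::euclidean_space"
  assumes "(\<lambda>x::'a. R (norm x)) \<in> borel_measurable borel" and "h \<in> borel_measurable N"
  shows "(\<lambda>(u, v). R (norm (h u - h v))) \<in> borel_measurable (N \<Otimes>\<^sub>M N)"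
  using assms by (simp add: case_prod_beta')

lemma (in prob_space) integral_ge_min_0:
  fixes f :: "'a \<Rightarrow> real"
  assumes "\<And>x. x \<in> space M \<Longrightarrow> c \<le> f x"
  shows "min 0 c \<le> integral\<^sup>L M f"
proof (cases "integrable M f")
  case True
  then show ?thesis
    using assms by (intro min.coboundedI2 integral_ge_const) auto
qed (simp add: not_integrable_integral_eq)

lemma (in prob_space) integrable_bounded_kernel:
  fixes K :: "'a \<Rightarrow> 'a \<Rightarrow> real"
  assumes K: "(\<lambda>(u, v). K u v) \<in> borel_measurable (M \<Otimes>\<^sub>M M)"
    and bound: "\<And>u v. u \<in> space M \<Longrightarrow> v \<in> space M \<Longrightarrow> \<bar>K u v\<bar> \<le> C"
  shows "u \<in> space M \<Longrightarrow> integrable M (K u)"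
    and "integrable M (\<lambda>u. \<integral>v. K u v \<partial>M)"
proof -
  show inner: "integrable M (K u)" if u: "u \<in> space M" for u
    using measurable_Pair2[OF K u] bound[OF u] by (intro integrable_const_bound[where B=C]) auto
  have "\<bar>\<integral>v. K u v \<partial>M\<bar> \<le> C" if u: "u \<in> space M" for u
    using inner[OF u] bound[OF u] by (intro integral_le_const order.trans[OF integral_abs_bound]) auto
  then show "integrable M (\<lambda>u. \<integral>v. K u v \<partial>M)"
    using K by (intro integrable_const_bound[where B=C]) auto
qed

lemma (in prob_space) double_integral_mono:
  fixes K L :: "'a \<Rightarrow> 'a \<Rightarrow> real"
  assumes K: "(\<lambda>(u, v). K u v) \<in> borel_measurable (M \<Otimes>\<^sub>M M)"
    and L: "(\<lambda>(u, v). L u v) \<in> borel_measurable (M \<Otimes>\<^sub>M M)"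
    and bound_K: "\<And>u v. u \<in> space M \<Longrightarrow> v \<in> space M \<Longrightarrow> \<bar>K u v\<bar> \<le> C"
    and bound_L: "\<And>u v. u \<in> space M \<Longrightarrow> v \<in> space M \<Longrightarrow> \<bar>L u v\<bar> \<le> C"
    and le: "\<And>u v. u \<in> space M \<Longrightarrow> v \<in> space M \<Longrightarrow> K u v \<le> L u v"
  shows "(\<integral>u. (\<integral>v. K u v \<partial>M) \<partial>M) \<le> (\<integral>u. (\<integral>v. L u v \<partial>M) \<partial>M)"
  using integrable_bounded_kernel[OF K bound_K] integrable_bounded_kernel[OF L bound_L] le
  by (intro integral_mono) auto

lemma energy_distr:
  fixes \<xi> :: "real \<Rightarrow> 'a::euclidean_space"
  assumes R: "(\<lambda>x::'a. R (norm x)) \<in> borel_measurable borel"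
    and \<mu>: "prob_space \<mu>" and g: "g \<in> measurable \<mu> borel_01"
    and \<xi>: "\<xi> \<in> borel_measurable borel_01"
  shows "energy R \<xi> (distr \<mu> borel_01 g) = energy R (\<xi> \<circ> g) \<mu>"
proof -
  interpret \<nu>: prob_space "distr \<mu> borel_01 g"
    using prob_space.prob_space_distr[OF \<mu> g] .
  have K: "(\<lambda>(u, v). R (norm (\<xi> u - \<xi> v))) \<in> borel_measurable (borel_01 \<Otimes>\<^sub>M borel_01)"
    by (rule borel_measurable_kernel[OF R \<xi>])
  have "(\<lambda>u. \<integral>v. R (norm (\<xi> u - \<xi> v)) \<partial>distr \<mu> borel_01 g) \<in> borel_measurable borel_01"
    using K by (intro \<nu>.borel_measurable_lebesgue_integral) (simp cong: measurable_cong_sets)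
  moreover have "(\<lambda>v. R (norm (\<xi> u - \<xi> v))) \<in> borel_measurable borel_01" for u
    using R \<xi> by measurable
  ultimately show ?thesis
    unfolding energy_def by (simp add: integral_distr[OF g])
qed

lemma continuous_on_mono_section:
  fixes f :: "real \<Rightarrow> real"
  assumes f: "continuous_on {0..1} f" and f01: "f 0 \<le> f 1"
  shows "\<exists>g. mono g \<and> (\<forall>y. g y \<in> {0..1}) \<and> (\<forall>y\<in>{f 0..f 1}. f (g y) = y)"
proof -
  define S where "S y = {u\<in>{0..1}. y \<le> f u}" for y
  define G where "G y = Inf (S y)" for y
  have S_ne: "1 \<in> S y" if "y \<le> f 1" for y
    using that unfolding S_def by auto
  have S_bdd: "bdd_below (S y)" for y
    unfolding S_def by (auto intro: bdd_belowI[where m=0])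
  have "closed (S y)" for y
  proof -
    have "S y = {0..1} \<inter> f -` {y..}"
      unfolding S_def by auto
    then show ?thesis
      using continuous_closed_preimage[OF f] by simp
  qed
  then have G_in_S: "G y \<in> S y" if "y \<le> f 1" for y
    unfolding G_def using closed_contains_Inf[OF _ S_bdd] S_ne[OF that] by blast
  have G_section: "f (G y) = y" if y: "f 0 \<le> y" "y \<le> f 1" for y
  proof -
    have G: "G y \<in> {0..1}" "y \<le> f (G y)"
      using G_in_S[OF y(2)] unfolding S_def by auto
    \<comment> \<open>the infimum of \<open>S y\<close> is a first hitting point of the level y\<close>
    obtain x where x: "0 \<le> x" "x \<le> G y" "f x = y"
      using IVT'[of f 0 y "G y"] G y continuous_on_subset[OF f] by fastforce
    then have "x \<in> S y"
      using G unfolding S_def by auto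
    then have "G y \<le> x"
      unfolding G_def by (rule cInf_lower[OF _ S_bdd])
    with x show ?thesis
      by simp
  qed
  have G_mono: "G y \<le> G z" if "y \<le> z" "z \<le> f 1" for y z
  proof -
    have "S z \<subseteq> S y"
      unfolding S_def using that by auto
    then show ?thesis
      unfolding G_def using S_ne[OF that(2)] S_bdd by (intro cInf_superset_mono) auto
  qed
  define g where "g y = G (max (f 0) (min (f 1) y))" for y
  have "mono g"
    unfolding g_def mono_def using f01 by (intro allI impI G_mono) auto
  moreover have "g y \<in> {0..1}" for y
    using G_in_S[of "max (f 0) (min (f 1) y)"] f01 unfolding g_def S_def by auto
  moreover have "f (g y) = y" if "y \<in> {f 0..f 1}" for y
    using that G_section unfolding g_def by auto
  ultimately show ?thesis
    by blast
qed

lemma paths_reparametrisation_dominates_line: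
  fixes \<xi> :: "real \<Rightarrow> 'a::real_inner"
  assumes "\<xi> \<in> paths a b"
  shows "\<exists>g. mono g \<and> (\<forall>s. g s \<in> {0..1}) \<and>
    (\<forall>s\<in>{0..1}. \<forall>t\<in>{0..1}. \<bar>s - t\<bar> * norm (b - a) \<le> norm (\<xi> (g s) - \<xi> (g t)))"
proof -
  define L where "L = (norm (b - a))\<^sup>2"
  define f where "f u = (\<xi> u - a) \<bullet> (b - a)" for u
  have "continuous_on {0..1} f" "f 0 = 0" "f 1 = L"
    using assms unfolding paths_def f_def L_def
    by (auto intro!: continuous_intros simp: power2_norm_eq_inner)
  then obtain h where h: "mono h" "\<forall>y. h y \<in> {0..1}" "\<forall>y\<in>{0..L}. f (h y) = y"
    using continuous_on_mono_section[of f] L_def by auto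
  define g where "g s = h (s * L)" for s
  have "mono g"
    using h(1) unfolding g_def mono_def L_def by (simp add: mult_right_mono monoD)
  moreover have "g s \<in> {0..1}" for s
    using h(2) unfolding g_def by blast
  moreover have "\<bar>s - t\<bar> * norm (b - a) \<le> norm (\<xi> (g s) - \<xi> (g t))"
    if s: "s \<in> {0..1}" and t: "t \<in> {0..1}" for s t
  proof -
    have "x * L \<in> {0..L}" if "x \<in> {0..1}" for x
      using that unfolding L_def by (auto intro: mult_left_le_one_le)
    then have "f (g s) = s * L" "f (g t) = t * L"
      using h(3) s t unfolding g_def by auto
    then have "(\<xi> (g s) - \<xi> (g t)) \<bullet> (b - a) = (s - t) * L"
      unfolding f_def by (simp add: inner_diff_left algebra_simps)
    then have "\<bar>s - t\<bar> * norm (b - a) * norm (b - a) \<le> norm (\<xi> (g s) - \<xi> (g t)) * norm (b - a)"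
      using Cauchy_Schwarz_ineq2[of "\<xi> (g s) - \<xi> (g t)" "b - a"]
      unfolding L_def power2_eq_square by (simp add: abs_mult)
    then show ?thesis
      by (cases "b = a") simp_all
  qed
  ultimately show ?thesis
    by blast
qed

lemma antimono_kernel_bounds:
  fixes h :: "real \<Rightarrow> 'a::real_normed_vector"
  assumes R: "antimono_on {0..} R"
    and B: "\<forall>u\<in>{0..1}. norm (h u) \<le> B" and uv: "u \<in> {0..1}" "v \<in> {0..1}"
  shows "R (2 * B) \<le> R (norm (h u - h v))" and "R (norm (h u - h v)) \<le> R 0"
proof -
  have "norm (h u - h v) \<le> 2 * B"
    using norm_triangle_ineq4[of "h u" "h v"] bspec[OF B uv(1)] bspec[OF B uv(2)] by linarith
  then show "R (2 * B) \<le> R (norm (h u - h v))" "R (norm (h u - h v)) \<le> R 0"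
    using monotone_onD[OF R, of "norm (h u - h v)" "2 * B"] monotone_onD[OF R, of 0 "norm (h u - h v)"]
    by (simp_all add: order.trans[OF norm_ge_zero])
qed

lemma path_energy_le_energy:
  fixes \<xi> :: "real \<Rightarrow> 'a::real_normed_vector"
  assumes R: "antimono_on {0..} R"
    and \<xi>: "continuous_on {0..1} \<xi>" and \<mu>: "\<mu> \<in> prob_measures_01"
  shows "path_energy R \<xi> \<le> energy R \<xi> \<mu>"
proof -
  obtain B where B: "\<forall>u\<in>{0..1}. norm (\<xi> u) \<le> B"
    using compact_imp_bounded[OF compact_continuous_image[OF \<xi> compact_Icc]]
    unfolding bounded_iff by auto
  have "min 0 (min 0 (R (2 * B))) \<le> energy R \<xi> \<nu>" if \<nu>: "\<nu> \<in> prob_measures_01" for \<nu>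
  proof -
    interpret prob_space \<nu>
      using \<nu> unfolding prob_measures_01_def by auto
    show ?thesis
      unfolding energy_def using antimono_kernel_bounds(1)[OF R B] space_prob_measures_01[OF \<nu>]
      by (intro integral_ge_min_0) auto
  qed
  then show ?thesis
    unfolding path_energy_eq_INF_energy by (intro cINF_lower[OF _ \<mu>] bdd_belowI2)
qed

lemma energy_mono_dominated:
  fixes h k :: "real \<Rightarrow> 'a::euclidean_space"
  assumes R: "antimono_on {0..} R" and \<mu>: "\<mu> \<in> prob_measures_01"
    and h: "h \<in> borel_measurable borel_01" and k: "k \<in> borel_measurable borel_01"
    and B: "\<forall>u\<in>{0..1}. norm (h u) \<le> B" "\<forall>u\<in>{0..1}. norm (k u) \<le> B"
    and dominated: "\<And>u v. u \<in> {0..1} \<Longrightarrow> v \<in> {0..1} \<Longrightarrow> norm (k u - k v) \<le> norm (h u - h v)"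
  shows "energy R h \<mu> \<le> energy R k \<mu>"
  unfolding energy_def
proof (rule prob_space.double_integral_mono)
  show "prob_space \<mu>"
    using \<mu> unfolding prob_measures_01_def by simp
  have sets_\<mu>: "sets \<mu> = sets borel_01"
    using \<mu> unfolding prob_measures_01_def by simp
  have "h \<in> borel_measurable \<mu>" "k \<in> borel_measurable \<mu>"
    using h k by (simp_all cong: measurable_cong_sets[OF sets_\<mu> refl])
  from this[THEN borel_measurable_kernel[OF borel_measurable_antimono_norm[OF R]]]
  show "(\<lambda>(u, v). R (norm (h u - h v))) \<in> borel_measurable (\<mu> \<Otimes>\<^sub>M \<mu>)"
    "(\<lambda>(u, v). R (norm (k u - k v))) \<in> borel_measurable (\<mu> \<Otimes>\<^sub>M \<mu>)" .
  fix u v assume "u \<in> space \<mu>" "v \<in> space \<mu>"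
  then have uv: "u \<in> {0..1}" "v \<in> {0..1}"
    using space_prob_measures_01[OF \<mu>] by auto
  show "\<bar>R (norm (h u - h v))\<bar> \<le> max \<bar>R (2 * B)\<bar> \<bar>R 0\<bar>"
    "\<bar>R (norm (k u - k v))\<bar> \<le> max \<bar>R (2 * B)\<bar> \<bar>R 0\<bar>"
    using antimono_kernel_bounds[OF R B(1) uv] antimono_kernel_bounds[OF R B(2) uv]
    by linarith+
  show "R (norm (h u - h v)) \<le> R (norm (k u - k v))"
    using dominated[OF uv] by (auto intro: monotone_onD[OF R])
qed

lemma path_energy_le_line:
  fixes \<xi> :: "real \<Rightarrow> 'a::euclidean_space"
  assumes R: "antimono_on {0..} R" and \<xi>: "\<xi> \<in> paths a b"
  shows "path_energy R \<xi> \<le> path_energy R (\<lambda>u. a + u *\<^sub>R (b - a))"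
proof -
  define l where "l = (\<lambda>u::real. a + u *\<^sub>R (b - a))"
  obtain g where g: "mono g" "\<forall>s. g s \<in> {0..1}"
    and dominates: "\<forall>s\<in>{0..1}. \<forall>t\<in>{0..1}. \<bar>s - t\<bar> * norm (b - a) \<le> norm (\<xi> (g s) - \<xi> (g t))"
    using paths_reparametrisation_dominates_line[OF \<xi>] by blast
  have \<xi>_cont: "continuous_on {0..1} \<xi>"
    using \<xi> unfolding paths_def by simp
  have l_cont: "continuous_on {0..1} l"
    unfolding l_def by (intro continuous_intros)
  obtain B where B: "\<forall>u\<in>{0..1}. norm (\<xi> u) \<le> B" "\<forall>u\<in>{0..1}. norm (l u) \<le> B"
    using compact_imp_bounded[OF compact_Un[OF compact_continuous_image[OF \<xi>_cont compact_Icc]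
        compact_continuous_image[OF l_cont compact_Icc]]]
    unfolding bounded_iff by auto
  have g_meas: "g \<in> measurable borel_01 borel_01"
    using g by (intro measurable_restrict_space2 measurable_restrict_space1 borel_measurable_mono) auto
  have \<xi>_meas: "\<xi> \<in> borel_measurable borel_01" and l_meas: "l \<in> borel_measurable borel_01"
    using \<xi>_cont l_cont by (auto intro: borel_measurable_continuous_on_restrict)
  have "path_energy R \<xi> \<le> energy R l \<mu>" if \<mu>: "\<mu> \<in> prob_measures_01" for \<mu>
  proof -
    have prob: "prob_space \<mu>" and sets_\<mu>: "sets \<mu> = sets borel_01"
      using \<mu> unfolding prob_measures_01_def by auto
    have g_meas': "g \<in> measurable \<mu> borel_01"
      using g_meas by (simp cong: measurable_cong_sets[OF sets_\<mu> refl])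
    have "path_energy R \<xi> \<le> energy R \<xi> (distr \<mu> borel_01 g)"
      by (intro path_energy_le_energy[OF R \<xi>_cont] distr_in_prob_measures_01 prob g_meas')
    also have "\<dots> = energy R (\<xi> \<circ> g) \<mu>"
      by (rule energy_distr[OF borel_measurable_antimono_norm[OF R] prob g_meas' \<xi>_meas])
    also have "\<dots> \<le> energy R l \<mu>"
    proof (rule energy_mono_dominated[OF R \<mu> measurable_comp[OF g_meas \<xi>_meas] l_meas])
      show "\<forall>u\<in>{0..1}. norm ((\<xi> \<circ> g) u) \<le> B"
        using B(1) g(2) by simp
      fix u v :: real assume "u \<in> {0..1}" "v \<in> {0..1}"
      then show "norm (l u - l v) \<le> norm ((\<xi> \<circ> g) u - (\<xi> \<circ> g) v)"
        using dominates unfolding l_def by (simp add: scaleR_diff_left[symmetric])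
    qed (fact B(2))
    finally show ?thesis .
  qed
  then show ?thesis
    unfolding l_def[symmetric] path_energy_eq_INF_energy[of R l]
    using return_in_prob_measures_01[of 0] by (intro cINF_greatest) auto
qed

theorem proposition8p4:
  fixes M :: "'w measure" and X :: "'a::euclidean_space \<Rightarrow> 'w \<Rightarrow> real"
    and R :: "real \<Rightarrow> real" and a b :: 'a
  assumes "prob_space M"
    and "centered_gaussian_field M X"
    and "\<forall>\<omega>\<in>space M. continuous_on UNIV (\<lambda>t. X t \<omega>)"
    and "\<forall>s t. prob_space.expectation M (\<lambda>\<omega>. X s \<omega> * X t \<omega>) = R (norm (t - s))"
    and "\<forall>x y. 0 \<le> x \<longrightarrow> x \<le> y \<longrightarrow> R y \<le> R x"
  shows "(\<lambda>u. a + u *\<^sub>R (b - a)) \<in> paths a b \<and>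
         path_energy R (\<lambda>u. a + u *\<^sub>R (b - a)) = (SUP \<xi>\<in>paths a b. path_energy R \<xi>)"
proof -
  have antimono: "antimono_on {0..} R"
    using assms(5) by (auto intro: monotone_onI)
  have line: "(\<lambda>u. a + u *\<^sub>R (b - a)) \<in> paths a b"
    unfolding paths_def by (auto intro!: continuous_intros)
  moreover have "(SUP \<xi>\<in>paths a b. path_energy R \<xi>) = path_energy R (\<lambda>u. a + u *\<^sub>R (b - a))"
    using line path_energy_le_line[OF antimono] by (intro cSup_eq_maximum) blast+
  ultimately show ?thesis
    by simp
qed

end
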